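(* Let $P$ be an enhanced Gelfand--Zetlin pattern with top row $\lambda$, viewed as a graph whose vertices are its entries and whose edges are its edges. Then: (1) two entries of row $0$ belong to the same connected component if and only if they have the same value; (2) each connected component either has a unique highest vertex (a unique vertex in its row of smallest index) or contains at least one entry of row $0$; (3) all vertices of a connected component, possibly except the highest one, are encircled; in particular, the number of connected components is at least the number of distinct values among $\lambda_1,\dots,\lambda_n$ plus the number of non-encircled entries.
   Context: Let $\lambda=(\lambda_1\ge\dots\ge\lambda_n)$ be a partition. A GZ pattern with top row $\lambda$ is an integer array $a_{ij}$, $0\le i\le n-1$, $1\le j\le n-i$ (row $0$ is the top row), with $a_{0j}=\lambda_{n+1-j}$ and $a_{i-1,j}\le a_{ij}\le a_{i-1,j+1}$ ($a_{ij}$ sits below $a_{i-1,j}$ and $a_{i-1,j+1}$). An enhanced GZ pattern is such an array with a set of encircled entries and a set of edges, each joining an $a_{ij}$ ($i\ge1$) with $a_{i-1,j}$ or $a_{i-1,j+1}$, such that: (1) row $0$ entries are encircled; (2) entries joined by an edge are equal and the lower one is encircled; (3) for $i\ge1$, $1\le j\le n-i-1$: both $a_{ij},a_{i,j+1}$ are joined to $a_{i-1,j+1}$ iff both are joined to $a_{i+1,j}$; (4) if $a_{0j}=a_{0,j+1}$ then $a_{1j}$ is encircled and joined to both; (5) if $a_{i-1,j}<a_{i-1,j+1}$ and $a_{ij}=a_{i-1,j}$, then $a_{ij}$ is encircled and joined to $a_{i-1,j}$; (6) if $a_{i-1,j}<a_{i-1,j+1}$, $a_{ij}=a_{i-1,j+1}$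 and $a_{ij}$ is encircled, then it is joined to $a_{i-1,j+1}$; (7) if $a_{i-1,j}=a_{i-1,j+1}=a_{ij}$ and $a_{i-1,j},a_{i-1,j+1}$ can be connected by a path of edges, then $a_{ij}$ is encircled and joined to both; (8) if $a_{i-1,j}=a_{i-1,j+1}=a_{ij}$ and $a_{ij}$ is encircled, then it is joined to at least one of them. *)

theory Defs
  imports Main
begin

text \<open>Entries of a GZ pattern of size n are indexed by pairs (i,j) with
  row 0 <= i <= n-1 (row 0 is the top row) and position 1 <= j <= n-i.
  The pattern is a function a :: nat \<times> nat \<Rightarrow> int (values off the
  index set are irrelevant).\<close>

definition gz_vertices :: "nat \<Rightarrow> (nat \<times> nat) set" where
  "gz_vertices n = {(i, j). i < n \<and> 1 \<le> j \<and> j \<le> n - i}"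

definition is_partition :: "nat \<Rightarrow> (nat \<Rightarrow> int) \<Rightarrow> bool" where
  "is_partition n lam \<longleftrightarrow>
     (\<forall>k. 1 \<le> k \<and> k < n \<longrightarrow> lam (k + 1) \<le> lam k) \<and>
     (\<forall>k. 1 \<le> k \<and> k \<le> n \<longrightarrow> 0 \<le> lam k)"

definition gz_pattern :: "nat \<Rightarrow> (nat \<Rightarrow> int) \<Rightarrow> (nat \<times> nat \<Rightarrow> int) \<Rightarrow> bool" where
  "gz_pattern n lam a \<longleftrightarrow>
     (\<forall>j. 1 \<le> j \<and> j \<le> n \<longrightarrow> a (0, j) = lam (n + 1 - j)) \<and>
     (\<forall>i j. (i, j) \<in> gz_vertices n \<and> 1 \<le> i \<longrightarrow>
        a (i - 1, j) \<le> a (i, j) \<and> a (i, j) \<le> a (i - 1, j + 1))"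

text \<open>Edges are stored as pairs (lower entry, upper entry). The graph relation
  of the pattern: two entries are joined by a path of edges.\<close>

definition gz_connected :: "((nat \<times> nat) \<times> (nat \<times> nat)) set \<Rightarrow> nat \<times> nat \<Rightarrow> nat \<times> nat \<Rightarrow> bool" where
  "gz_connected E u v \<longleftrightarrow> (u, v) \<in> (E \<union> E\<inverse>)\<^sup>*"

definition enhanced_gz ::
  "nat \<Rightarrow> (nat \<Rightarrow> int) \<Rightarrow> (nat \<times> nat \<Rightarrow> int) \<Rightarrow> (nat \<times> nat) set
     \<Rightarrow> ((nat \<times> nat) \<times> (nat \<times> nat)) set \<Rightarrow> bool" where
  "enhanced_gz n lam a C E \<longleftrightarrow>
     gz_pattern n lam a \<and>
     C \<subseteq> gz_vertices n \<and>
     E \<subseteq> {((i, j), (i', j')). (i, j) \<in> gz_vertices n \<and> 1 \<le> i \<and> i' = i - 1 \<and> (j' = j \<or> j' = j + 1)} \<and>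
     \<comment> \<open>(1)\<close>
     (\<forall>j. 1 \<le> j \<and> j \<le> n \<longrightarrow> (0, j) \<in> C) \<and>
     \<comment> \<open>(2)\<close>
     (\<forall>p q. (p, q) \<in> E \<longrightarrow> a p = a q \<and> p \<in> C) \<and>
     \<comment> \<open>(3)\<close>
     (\<forall>i j. 1 \<le> i \<and> 1 \<le> j \<and> j + 1 \<le> n - i \<longrightarrow>
        ((((i, j), (i - 1, j + 1)) \<in> E \<and> ((i, j + 1), (i - 1, j + 1)) \<in> E) \<longleftrightarrow>
         (((i + 1, j), (i, j)) \<in> E \<and> ((i + 1, j), (i, j + 1)) \<in> E))) \<and>
     \<comment> \<open>(4)\<close>
     (\<forall>j. 1 \<le> j \<and> j + 1 \<le> n \<and> a (0, j) = a (0, j + 1) \<longrightarrow>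
        (1, j) \<in> C \<and> ((1, j), (0, j)) \<in> E \<and> ((1, j), (0, j + 1)) \<in> E) \<and>
     \<comment> \<open>(5)\<close>
     (\<forall>i j. (i, j) \<in> gz_vertices n \<and> 1 \<le> i \<and> a (i - 1, j) < a (i - 1, j + 1) \<and> a (i, j) = a (i - 1, j) \<longrightarrow>
        (i, j) \<in> C \<and> ((i, j), (i - 1, j)) \<in> E) \<and>
     \<comment> \<open>(6)\<close>
     (\<forall>i j. (i, j) \<in> gz_vertices n \<and> 1 \<le> i \<and> a (i - 1, j) < a (i - 1, j + 1) \<and> a (i, j) = a (i - 1, j + 1)
          \<and> (i, j) \<in> C \<longrightarrow> ((i, j), (i - 1, j + 1)) \<in> E) \<and>
     \<comment> \<open>(7)\<close>
     (\<forall>i j. (i, j) \<in> gz_vertices n \<and> 1 \<le> i \<and> a (i - 1, j) = a (i - 1, j + 1) \<and> a (i, j) = a (i - 1, j)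
          \<and> gz_connected E (i - 1, j) (i - 1, j + 1) \<longrightarrow>
        (i, j) \<in> C \<and> ((i, j), (i - 1, j)) \<in> E \<and> ((i, j), (i - 1, j + 1)) \<in> E) \<and>
     \<comment> \<open>(8)\<close>
     (\<forall>i j. (i, j) \<in> gz_vertices n \<and> 1 \<le> i \<and> a (i - 1, j) = a (i - 1, j + 1) \<and> a (i, j) = a (i - 1, j)
          \<and> (i, j) \<in> C \<longrightarrow>
        ((i, j), (i - 1, j)) \<in> E \<or> ((i, j), (i - 1, j + 1)) \<in> E)"

definition gz_components :: "nat \<Rightarrow> ((nat \<times> nat) \<times> (nat \<times> nat)) set \<Rightarrow> (nat \<times> nat) set set" where
  "gz_components n E = gz_vertices n // {(u, v). u \<in> gz_vertices n \<and> v \<in> gz_vertices n \<and> gz_connected E u v}"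

end

theory Submission
  imports Defs
begin

text \<open>Orient every edge upwards, from the lower entry to the upper one, so that the row index
  drops by one along each edge. Condition (3) says that a fork below row 0, an entry with edges
  to both entries above it, closes up again: both are joined to the entry above them. Hence, for
  an entry v below row 0 without an upward edge, the set of entries from which v is reached by
  going upwards is closed under upward edges (induction on the row); it is trivially closed under
  downward edges, so it is the whole component of v, and v is its unique highest vertex.
  Non-encircled entries have no upward edge and lie below row 0, and in a component without
  top-row entries the highest entry has no upward edge either. Along the top row, which is
  monotone, equal neighbours are joined through the entry below them by (4), while edges only
  join equal values. So top-row components correspond to the distinct parts of \<lambda>, and
  the components of non-encircled entries are pairwise distinct and distinct from those.\<close>

lemma card_image_eq_if_same_fibres:
  assumes "\<And>x y. x \<in> A \<Longrightarrow> y \<in> A \<Longrightarrow> f x = f y \<longleftrightarrow> g x = g y"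
  shows "card (f ` A) = card (g ` A)"
proof (rule bij_betw_same_card)
  have inv: "g (inv_into A f (f x)) = g x" if "x \<in> A" for x
    using assms[of "inv_into A f (f x)" x] that by (simp add: inv_into_into f_inv_into_f)
  show "bij_betw (\<lambda>z. g (inv_into A f z)) (f ` A) (g ` A)"
    unfolding bij_betw_def inj_on_def image_image using assms by (auto simp: inv cong: image_cong)
qed

lemma reflect_image_atLeastAtMost: "(\<lambda>j. n + 1 - j) ` {1..n} = {1..(n::nat)}"
proof
  show "{1..n} \<subseteq> (\<lambda>j. n + 1 - j) ` {1..n}"
  proof
    fix k assume "k \<in> {1..n}"
    then have "k = n + 1 - (n + 1 - k)" "n + 1 - k \<in> {1..n}" by auto
    then show "k \<in> (\<lambda>j. n + 1 - j) ` {1..n}" by (rule rev_image_eqI[rotated])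
  qed
qed auto

lemma rtrancl_rank_less_or_eq:
  fixes rank :: "'a \<Rightarrow> nat"
  assumes rank: "\<And>x y. (x, y) \<in> E \<Longrightarrow> rank y < rank x"
    and "(u, v) \<in> E\<^sup>*"
  shows "rank v < rank u \<or> u = v"
  using assms(2)
proof induction
  case (step y z)
  with rank[of y z] show ?case by auto
qed simp

lemma rtrancl_to_sink_step:
  fixes rank :: "'a \<Rightarrow> nat"
  assumes rank: "\<And>x y. (x, y) \<in> E \<Longrightarrow> rank y < rank x"
    and sink: "v \<notin> Domain E"
    and diamond: "\<And>u p q. (u, p) \<in> E \<Longrightarrow> (u, q) \<in> E \<Longrightarrow> p \<noteq> q \<Longrightarrow> (p, v) \<in> E\<^sup>* \<Longrightarrow>
                    \<exists>z. (p, z) \<in> E \<and> (q, z) \<in> E"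
    and "(u, v) \<in> E\<^sup>*" "(u, w) \<in> E"
  shows "(w, v) \<in> E\<^sup>*"
  using assms(4,5)
proof (induction "rank u" arbitrary: u w rule: less_induct)
  case less
  from \<open>(u, v) \<in> E\<^sup>*\<close> sink \<open>(u, w) \<in> E\<close>
  obtain p where up: "(u, p) \<in> E" and pv: "(p, v) \<in> E\<^sup>*"
    by (metis DomainI converse_rtranclE)
  show ?case
  proof (cases "p = w")
    case False
    then obtain z where pz: "(p, z) \<in> E" and wz: "(w, z) \<in> E"
      using diamond[OF up \<open>(u, w) \<in> E\<close> _ pv] by blast
    have "(z, v) \<in> E\<^sup>*"
      using less.hyps[OF rank[OF up] pv pz] .
    with wz show ?thesis by (rule converse_rtrancl_into_rtrancl)
  qed (use pv in simp)
qed

lemma rtrancl_to_sink_if_connected: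
  fixes rank :: "'a \<Rightarrow> nat"
  assumes rank: "\<And>x y. (x, y) \<in> E \<Longrightarrow> rank y < rank x"
    and sink: "v \<notin> Domain E"
    and diamond: "\<And>u p q. (u, p) \<in> E \<Longrightarrow> (u, q) \<in> E \<Longrightarrow> p \<noteq> q \<Longrightarrow> (p, v) \<in> E\<^sup>* \<Longrightarrow>
                    \<exists>z. (p, z) \<in> E \<and> (q, z) \<in> E"
    and "(v, u) \<in> (E \<union> E\<inverse>)\<^sup>*"
  shows "(u, v) \<in> E\<^sup>*"
  using assms(4)
proof induction
  case (step x y)
  show ?case
  proof (cases "(x, y) \<in> E")
    case True
    show ?thesis
      using rtrancl_to_sink_step[where rank = rank, OF rank sink diamond step.IH True] .
  next
    case False
    with step.hyps(2) have "(y, x) \<in> E" by blast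
    then show ?thesis using step.IH by (rule converse_rtrancl_into_rtrancl)
  qed
qed simp

lemma finite_gz_vertices: "finite (gz_vertices n)"
proof (rule finite_subset)
  show "gz_vertices n \<subseteq> {..<n} \<times> {..n}" by (auto simp: gz_vertices_def)
qed simp

lemma gz_vertices_top_row [simp]: "(0, j) \<in> gz_vertices n \<longleftrightarrow> 1 \<le> j \<and> j \<le> n"
  by (auto simp: gz_vertices_def)

lemma gz_connected_refl: "gz_connected E u u"
  by (simp add: gz_connected_def)

lemma gz_connected_sym: "gz_connected E u v \<Longrightarrow> gz_connected E v u"
  unfolding gz_connected_def
  by (metis converse_Un converse_converse rtrancl_converseI sup_commute)

lemma gz_connected_trans: "gz_connected E u v \<Longrightarrow> gz_connected E v w \<Longrightarrow> gz_connected E u w"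
  unfolding gz_connected_def by (rule rtrancl_trans)

lemma gz_connected_edge: "(u, v) \<in> E \<Longrightarrow> gz_connected E u v"
  by (auto simp: gz_connected_def)

lemma is_partition_antimono:
  assumes "is_partition n lam" "1 \<le> k" "k \<le> l" "l \<le> n"
  shows "lam l \<le> lam k"
  using assms(3,4)
proof (induction l rule: dec_induct)
  case (step l)
  with assms(1,2) have "lam (Suc l) \<le> lam l" by (simp add: is_partition_def)
  with step show ?case by simp
qed simp

lemma gz_pattern_top_row:
  "gz_pattern n lam a \<Longrightarrow> 1 \<le> j \<Longrightarrow> j \<le> n \<Longrightarrow> a (0, j) = lam (n + 1 - j)"
  by (simp add: gz_pattern_def)

lemma gz_pattern_top_row_mono:
  assumes "is_partition n lam" "gz_pattern n lam a" "1 \<le> j" "j \<le> k" "k \<le> n"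
  shows "a (0, j) \<le> a (0, k)"
  using assms is_partition_antimono[OF assms(1), of "n + 1 - k" "n + 1 - j"]
  by (simp add: gz_pattern_top_row)

lemma enhanced_gzD:
  assumes "enhanced_gz n lam a C E"
  shows "gz_pattern n lam a"
    and "E \<subseteq> {((i, j), (i', j')).
           (i, j) \<in> gz_vertices n \<and> 1 \<le> i \<and> i' = i - 1 \<and> (j' = j \<or> j' = j + 1)}"
    and "\<forall>j. 1 \<le> j \<and> j \<le> n \<longrightarrow> (0, j) \<in> C"
    and "\<forall>p q. (p, q) \<in> E \<longrightarrow> a p = a q \<and> p \<in> C"
    and "\<forall>i j. 1 \<le> i \<and> 1 \<le> j \<and> j + 1 \<le> n - i \<longrightarrow>
        ((((i, j), (i - 1, j + 1)) \<in> E \<and> ((i, j + 1), (i - 1, j + 1)) \<in> E) \<longleftrightarrow>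
         (((i + 1, j), (i, j)) \<in> E \<and> ((i + 1, j), (i, j + 1)) \<in> E))"
    and "\<forall>j. 1 \<le> j \<and> j + 1 \<le> n \<and> a (0, j) = a (0, j + 1) \<longrightarrow>
        (1, j) \<in> C \<and> ((1, j), (0, j)) \<in> E \<and> ((1, j), (0, j + 1)) \<in> E"
  using assms unfolding enhanced_gz_def by - (elim conjE, assumption)+

lemma enhanced_gz_edgeD:
  assumes enh: "enhanced_gz n lam a C E" and pq: "(p, q) \<in> E"
  shows "p \<in> gz_vertices n" "q \<in> gz_vertices n" "1 \<le> fst p" "fst q = fst p - 1"
    "snd q = snd p \<or> snd q = snd p + 1" "a p = a q" "p \<in> C"
  using enhanced_gzD(2,4)[OF enh] pq by (auto simp: gz_vertices_def)

lemma enhanced_gz_edge_rank: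
  assumes "enhanced_gz n lam a C E" "(p, q) \<in> E"
  shows "fst q < fst p"
  using enhanced_gz_edgeD(3,4)[OF assms] by simp

lemma enhanced_gz_Domain_subset: "enhanced_gz n lam a C E \<Longrightarrow> Domain E \<subseteq> C"
  using enhanced_gz_edgeD(7) by blast

lemma enhanced_gz_top_row_encircled:
  "enhanced_gz n lam a C E \<Longrightarrow> 1 \<le> j \<Longrightarrow> j \<le> n \<Longrightarrow> (0, j) \<in> C"
  using enhanced_gzD(3) by blast

lemma enhanced_gz_top_row_equal_joined:
  assumes "enhanced_gz n lam a C E" "1 \<le> j" "j + 1 \<le> n" "a (0, j) = a (0, j + 1)"
  shows "gz_connected E (0, j) (0, j + 1)"
proof -
  from enhanced_gzD(6)[OF assms(1)] assms(2-4)
  have "((1, j), (0, j)) \<in> E" "((1, j), (0, j + 1)) \<in> E" by blast+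
  then show ?thesis
    by (meson gz_connected_edge gz_connected_sym gz_connected_trans)
qed

lemma enhanced_gz_fork_closes:
  assumes enh: "enhanced_gz n lam a C E" and up: "(u, p) \<in> E" "(u, q) \<in> E"
    and "p \<noteq> q" "1 \<le> fst p"
  shows "\<exists>z. (p, z) \<in> E \<and> (q, z) \<in> E"
proof -
  obtain i j where u: "u = (i + 1, j)"
    using enhanced_gz_edgeD(3)[OF enh up(1)]
    by (metis add.commute le_add_diff_inverse prod.collapse)
  have pq: "{p, q} = {(i, j), (i, j + 1)}"
    using enhanced_gz_edgeD(4,5)[OF enh up(1)] enhanced_gz_edgeD(4,5)[OF enh up(2)]
      \<open>p \<noteq> q\<close> u
    by (cases p; cases q) auto
  have "p \<in> {(i, j), (i, j + 1)}" using pq by blast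
  with \<open>1 \<le> fst p\<close> have "1 \<le> i" by auto
  moreover have "1 \<le> j" "j + 1 \<le> n - i"
    using enhanced_gz_edgeD(1)[OF enh up(1)] u by (auto simp: gz_vertices_def)
  moreover have "((i + 1, j), (i, j)) \<in> E" "((i + 1, j), (i, j + 1)) \<in> E"
    using pq up u by (metis doubleton_eq_iff)+
  ultimately have "((i, j), (i - 1, j + 1)) \<in> E" "((i, j + 1), (i - 1, j + 1)) \<in> E"
    using enhanced_gzD(5)[OF enh] by blast+
  with pq show ?thesis by (metis doubleton_eq_iff)
qed

lemma enhanced_gz_connected_same_value:
  assumes enh: "enhanced_gz n lam a C E" and "gz_connected E u v"
  shows "a u = a v"
  using assms(2) unfolding gz_connected_def
proof induction
  case (step x y)
  then show ?case
    using enhanced_gz_edgeD(6)[OF enh, of x y] enhanced_gz_edgeD(6)[OF enh, of y x] by auto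
qed simp

lemma enhanced_gz_top_row_connected:
  assumes part: "is_partition n lam" and enh: "enhanced_gz n lam a C E"
    and "1 \<le> j" "j \<le> k" "k \<le> n" "a (0, j) = a (0, k)"
  shows "gz_connected E (0, j) (0, k)"
  using assms(4-6)
proof (induction k)
  case (Suc k)
  show ?case
  proof (cases "j = Suc k")
    case False
    with Suc.prems have "j \<le> k" by simp
    have "a (0, j) \<le> a (0, k)" "a (0, k) \<le> a (0, Suc k)"
      using gz_pattern_top_row_mono[OF part enhanced_gzD(1)[OF enh]]
        \<open>j \<le> k\<close> \<open>1 \<le> j\<close> \<open>Suc k \<le> n\<close>
      by simp_all
    with Suc.prems have "a (0, j) = a (0, k)" "a (0, k) = a (0, k + 1)" by simp_all
    with Suc \<open>j \<le> k\<close> \<open>1 \<le> j\<close> show ?thesis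
      using enhanced_gz_top_row_equal_joined[OF enh] gz_connected_trans by fastforce
  qed (simp add: gz_connected_refl)
qed (use \<open>1 \<le> j\<close> in simp)

lemma enhanced_gz_top_row_connected_iff:
  assumes "is_partition n lam" "enhanced_gz n lam a C E"
    and "1 \<le> j" "j \<le> n" "1 \<le> k" "k \<le> n"
  shows "gz_connected E (0, j) (0, k) \<longleftrightarrow> a (0, j) = a (0, k)"
  using enhanced_gz_connected_same_value[OF assms(2)]
    enhanced_gz_top_row_connected[OF assms(1,2)] gz_connected_sym assms(3-6)
  by (metis nle_le)

lemma enhanced_gz_sink_highest:
  assumes enh: "enhanced_gz n lam a C E" and "1 \<le> fst v" "v \<notin> Domain E"
    and "gz_connected E v u"
  shows "fst v < fst u \<or> u = v"
proof -
  have "(u, v) \<in> E\<^sup>*"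
  proof (rule rtrancl_to_sink_if_connected)
    show "(x, y) \<in> E \<Longrightarrow> fst y < fst x" for x y
      by (rule enhanced_gz_edge_rank[OF enh])
    show "\<exists>z. (p, z) \<in> E \<and> (q, z) \<in> E"
      if "(w, p) \<in> E" "(w, q) \<in> E" "p \<noteq> q" "(p, v) \<in> E\<^sup>*" for w p q
    proof (rule enhanced_gz_fork_closes[OF enh that(1-3)])
      from rtrancl_rank_less_or_eq[where rank = fst, OF enhanced_gz_edge_rank[OF enh] that(4)]
        \<open>1 \<le> fst v\<close>
      show "1 \<le> fst p" by auto
    qed
  qed (use assms in \<open>simp_all add: gz_connected_def\<close>)
  then show ?thesis
    using rtrancl_rank_less_or_eq[where rank = fst, OF enhanced_gz_edge_rank[OF enh]] by blast
qed

lemma enhanced_gz_non_encircled_highest: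
  assumes enh: "enhanced_gz n lam a C E" and "v \<in> gz_vertices n" "v \<notin> C"
    and "gz_connected E v u"
  shows "fst v < fst u \<or> u = v"
proof (rule enhanced_gz_sink_highest[OF enh _ _ assms(4)])
  show "v \<notin> Domain E" using enhanced_gz_Domain_subset[OF enh] \<open>v \<notin> C\<close> by blast
  show "1 \<le> fst v"
  proof (rule ccontr)
    assume "\<not> 1 \<le> fst v"
    with \<open>v \<in> gz_vertices n\<close> have "v = (0, snd v)" "1 \<le> snd v" "snd v \<le> n"
      by (auto simp: gz_vertices_def)
    with enhanced_gz_top_row_encircled[OF enh] \<open>v \<notin> C\<close> show False by metis
  qed
qed

definition gz_component ::
    "nat \<Rightarrow> ((nat \<times> nat) \<times> (nat \<times> nat)) set \<Rightarrow> nat \<times> nat \<Rightarrow> (nat \<times> nat) set" where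
  "gz_component n E v = {u \<in> gz_vertices n. gz_connected E v u}"

lemma gz_components_eq_image: "gz_components n E = gz_component n E ` gz_vertices n"
  unfolding gz_components_def gz_component_def quotient_def by auto

lemma gz_component_eq_iff:
  assumes "u \<in> gz_vertices n" "w \<in> gz_vertices n"
  shows "gz_component n E u = gz_component n E w \<longleftrightarrow> gz_connected E u w"
  using assms unfolding gz_component_def
  by (auto intro: gz_connected_refl gz_connected_trans gz_connected_sym)

lemma gz_componentsE:
  assumes "K \<in> gz_components n E"
  obtains x where "x \<in> gz_vertices n" "K = gz_component n E x" "x \<in> K"
  using assms by (auto simp: gz_components_eq_image gz_component_def gz_connected_refl)

lemma gz_components_subset: "K \<in> gz_components n E \<Longrightarrow> K \<subseteq> gz_vertices n"
  by (auto simp: gz_components_eq_image gz_component_def)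

lemma gz_components_connected:
  "K \<in> gz_components n E \<Longrightarrow> u \<in> K \<Longrightarrow> w \<in> K \<Longrightarrow> gz_connected E u w"
  by (elim gz_componentsE) (auto simp: gz_component_def intro: gz_connected_trans gz_connected_sym)

lemma enhanced_gz_component_non_encircled_highest:
  assumes enh: "enhanced_gz n lam a C E" and K: "K \<in> gz_components n E"
    and "v \<in> K" "v \<notin> C" "u \<in> K"
  shows "fst v \<le> fst u \<and> (fst u = fst v \<longrightarrow> u = v)"
proof -
  from K \<open>v \<in> K\<close> have "v \<in> gz_vertices n" by (auto dest: gz_components_subset)
  from enhanced_gz_non_encircled_highest[OF enh this \<open>v \<notin> C\<close>
      gz_components_connected[OF K \<open>v \<in> K\<close> \<open>u \<in> K\<close>]]
  show ?thesis by auto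
qed

lemma enhanced_gz_components_edge_closed:
  assumes "enhanced_gz n lam a C E" "K \<in> gz_components n E" "u \<in> K" "(u, w) \<in> E"
  shows "w \<in> K"
  using assms(2,3) enhanced_gz_edgeD(2)[OF assms(1,4)] gz_connected_edge[OF assms(4)]
  by (elim gz_componentsE) (auto simp: gz_component_def intro: gz_connected_trans)

lemma enhanced_gz_component_unique_highest:
  assumes enh: "enhanced_gz n lam a C E" and K: "K \<in> gz_components n E"
    and no_top: "\<forall>j. (0, j) \<notin> K"
  shows "\<exists>!w. w \<in> K \<and> (\<forall>u \<in> K. fst w \<le> fst u)"
proof -
  obtain x where "x \<in> K" using K by (rule gz_componentsE)
  then obtain w where w: "w \<in> K" and w_min: "\<forall>u \<in> K. fst w \<le> fst u"
    using ex_has_least_nat[of "\<lambda>u. u \<in> K" x fst] by blast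
  have "1 \<le> fst w"
    using no_top w by (metis less_one not_le prod.collapse)
  moreover have "w \<notin> Domain E"
  proof
    assume "w \<in> Domain E"
    then obtain y where "(w, y) \<in> E" by blast
    with w w_min enhanced_gz_components_edge_closed[OF enh K] show False
      using enhanced_gz_edge_rank[OF enh] leD by blast
  qed
  ultimately have "fst w < fst u \<or> u = w" if "u \<in> K" for u
    using enhanced_gz_sink_highest[OF enh] gz_components_connected[OF K w that] by blast
  with w w_min show ?thesis by (metis leD)
qed

lemma enhanced_gz_card_top_row_components:
  assumes part: "is_partition n lam" and enh: "enhanced_gz n lam a C E"
  shows "card ((\<lambda>j. gz_component n E (0, j)) ` {1..n}) = card (lam ` {1..n})"
proof -
  have "card ((\<lambda>j. gz_component n E (0, j)) ` {1..n}) = card ((\<lambda>j. a (0, j)) ` {1..n})"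
    by (rule card_image_eq_if_same_fibres)
      (simp add: gz_component_eq_iff enhanced_gz_top_row_connected_iff[OF part enh])
  also have "(\<lambda>j. a (0, j)) ` {1..n} = lam ` (\<lambda>j. n + 1 - j) ` {1..n}"
    by (auto simp: gz_pattern_top_row[OF enhanced_gzD(1)[OF enh]] image_image intro!: image_cong)
  finally show ?thesis unfolding reflect_image_atLeastAtMost .
qed

lemma enhanced_gz_card_components:
  assumes part: "is_partition n lam" and enh: "enhanced_gz n lam a C E"
  shows "card (lam ` {1..n}) + card (gz_vertices n - C) \<le> card (gz_components n E)"
proof -
  let ?T = "(\<lambda>j. gz_component n E (0, j)) ` {1..n}"
  let ?N = "gz_component n E ` (gz_vertices n - C)"
  have sub: "?T \<union> ?N \<subseteq> gz_components n E"
    by (auto simp: gz_components_eq_image)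
  have fin: "finite (gz_components n E)"
    by (simp add: gz_components_eq_image finite_gz_vertices)
  have "?T \<inter> ?N = {}"
  proof (rule ccontr)
    assume "?T \<inter> ?N \<noteq> {}"
    then obtain j v where "j \<in> {1..n}" "v \<in> gz_vertices n" "v \<notin> C"
      and "gz_component n E (0, j) = gz_component n E v"
      by blast
    then have "gz_connected E (0, j) v" by (simp add: gz_component_eq_iff)
    from enhanced_gz_non_encircled_highest[OF enh \<open>v \<in> gz_vertices n\<close> \<open>v \<notin> C\<close>
        gz_connected_sym[OF this]]
    have "v = (0, j)" by auto
    with enhanced_gz_top_row_encircled[OF enh] \<open>j \<in> {1..n}\<close> \<open>v \<notin> C\<close> show False by simp
  qed
  moreover have "inj_on (gz_component n E) (gz_vertices n - C)"
  proof (rule inj_onI)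
    fix v w assume v: "v \<in> gz_vertices n - C" and w: "w \<in> gz_vertices n - C"
      and "gz_component n E v = gz_component n E w"
    then have "gz_connected E v w" "gz_connected E w v"
      using gz_component_eq_iff gz_connected_sym by blast+
    with enhanced_gz_non_encircled_highest[OF enh] v w show "v = w"
      by (metis DiffE less_asym)
  qed
  ultimately have "card (lam ` {1..n}) + card (gz_vertices n - C) = card (?T \<union> ?N)"
    using enhanced_gz_card_top_row_components[OF part enh] finite_subset[OF sub fin]
    by (simp add: card_Un_disjoint card_image)
  also have "\<dots> \<le> card (gz_components n E)"
    using sub fin by (rule card_mono[rotated])
  finally show ?thesis .
qed

theorem lemma4p1:
  fixes n :: nat and lam :: "nat \<Rightarrow> int" and a :: "nat \<times> nat \<Rightarrow> int"
    and C :: "(nat \<times> nat) set" and E :: "((nat \<times> nat) \<times> (nat \<times> nat)) set"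
  assumes "is_partition n lam"
    and "enhanced_gz n lam a C E"
  shows "(\<forall>j k. 1 \<le> j \<and> j \<le> n \<and> 1 \<le> k \<and> k \<le> n \<longrightarrow>
            (gz_connected E (0, j) (0, k) \<longleftrightarrow> a (0, j) = a (0, k))) \<and>
         (\<forall>K \<in> gz_components n E.
            (\<exists>!w. w \<in> K \<and> (\<forall>u \<in> K. fst w \<le> fst u)) \<or> (\<exists>j. (0, j) \<in> K)) \<and>
         (\<forall>K \<in> gz_components n E. \<forall>v \<in> K. v \<notin> C \<longrightarrow>
            (\<forall>u \<in> K. fst v \<le> fst u \<and> (fst u = fst v \<longrightarrow> u = v))) \<and>
         card (lam ` {1..n}) + card (gz_vertices n - C) \<le> card (gz_components n E)"
proof (intro conjI)
  show "\<forall>j k. 1 \<le> j \<and> j \<le> n \<and> 1 \<le> k \<and> k \<le> n \<longrightarrow>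
          (gz_connected E (0, j) (0, k) \<longleftrightarrow> a (0, j) = a (0, k))"
    using enhanced_gz_top_row_connected_iff[OF assms] by blast
  show "\<forall>K \<in> gz_components n E.
          (\<exists>!w. w \<in> K \<and> (\<forall>u \<in> K. fst w \<le> fst u)) \<or> (\<exists>j. (0, j) \<in> K)"
    using enhanced_gz_component_unique_highest[OF assms(2)] by blast
  show "\<forall>K \<in> gz_components n E. \<forall>v \<in> K. v \<notin> C \<longrightarrow>
          (\<forall>u \<in> K. fst v \<le> fst u \<and> (fst u = fst v \<longrightarrow> u = v))"
    using enhanced_gz_component_non_encircled_highest[OF assms(2)] by blast
  show "card (lam ` {1..n}) + card (gz_vertices n - C) \<le> card (gz_components n E)"
    by (rule enhanced_gz_card_components[OF assms])
qed

end
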